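(* Let $\mathcal A$ be a unital nuclear C$^*$-algebra, $\mathcal H$ a Hilbert space, $\psi:\mathcal A\to B(\mathcal H)$ a positive linear map and $n\in\mathbb N$. If $a_{-n+1},\dots,a_{n-1}\in\mathcal A$ are such that the Toeplitz matrix $[a_{i-j}]_{i,j=0}^{n-1}\in M_n(\mathcal A)$ is positive, then the operator matrix $[\psi(a_{i-j})]_{i,j=0}^{n-1}$ is a positive operator on $\bigoplus_1^n\mathcal H$. *)

theory Defs
  imports "HOL-Analysis.Analysis"
begin

class complex_vector = real_vector +
  fixes cscale :: "complex \<Rightarrow> 'a \<Rightarrow> 'a"  (infixr \<open>*\<^sub>C\<close> 75)
  assumes cscale_add_right: "c *\<^sub>C (x + y) = c *\<^sub>C x + c *\<^sub>C y"
    and cscale_add_left: "(c + d) *\<^sub>C x = c *\<^sub>C x + d *\<^sub>C x"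
    and cscale_cscale: "c *\<^sub>C (d *\<^sub>C x) = (c * d) *\<^sub>C x"
    and cscale_one: "1 *\<^sub>C x = x"
    and scaleR_cscale: "r *\<^sub>R x = complex_of_real r *\<^sub>C x"

class complex_normed_vector = complex_vector + real_normed_vector +
  assumes norm_cscale: "norm (c *\<^sub>C x) = cmod c * norm x"

class cstar_algebra = complex_normed_vector + real_normed_algebra_1 + banach +
  fixes adj :: "'a \<Rightarrow> 'a"
  assumes cscale_mult_left: "c *\<^sub>C (x * y) = (c *\<^sub>C x) * y"
    and cscale_mult_right: "c *\<^sub>C (x * y) = x * (c *\<^sub>C y)"
    and adj_adj: "adj (adj x) = x"
    and adj_add: "adj (x + y) = adj x + adj y"
    and adj_cscale: "adj (c *\<^sub>C x) = cnj c *\<^sub>C adj x"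
    and adj_mult: "adj (x * y) = adj y * adj x"
    and cstar_identity: "norm (adj x * x) = norm x * norm x"

class complex_inner = complex_normed_vector +
  fixes cinner :: "'a \<Rightarrow> 'a \<Rightarrow> complex"
  assumes cinner_add_left: "cinner (x + y) z = cinner x z + cinner y z"
    and cinner_cscale_left: "cinner (c *\<^sub>C x) y = c * cinner x y"
    and cinner_commute: "cinner y x = cnj (cinner x y)"
    and cinner_zero_iff: "cinner x x = 0 \<longleftrightarrow> x = 0"
    and norm_eq_sqrt_cinner: "norm x = sqrt (Re (cinner x x))"

definition cnonneg :: "complex \<Rightarrow> bool" where
  "cnonneg z \<longleftrightarrow> Im z = 0 \<and> 0 \<le> Re z"

definition bounded_clinear_op :: "('h::complex_normed_vector \<Rightarrow> 'h) \<Rightarrow> bool" where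
  "bounded_clinear_op T \<longleftrightarrow>
     (\<forall>x y. T (x + y) = T x + T y) \<and> (\<forall>c x. T (c *\<^sub>C x) = c *\<^sub>C T x) \<and>
     (\<exists>K. \<forall>x. norm (T x) \<le> norm x * K)"

definition cstar_pos :: "'a::cstar_algebra \<Rightarrow> bool" where
  "cstar_pos a \<longleftrightarrow> (\<exists>b. a = adj b * b)"

text \<open>Positive elements of the C*-algebra M_n(A) (matrices indexed by 0..n-1):
  those of the form Y* Y with Y in M_n(A).\<close>
definition mat_pos :: "nat \<Rightarrow> (nat \<Rightarrow> nat \<Rightarrow> 'a::cstar_algebra) \<Rightarrow> bool" where
  "mat_pos n X \<longleftrightarrow> (\<exists>Y. \<forall>i<n. \<forall>j<n. X i j = (\<Sum>k<n. adj (Y k i) * Y k j))"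

definition op_pos :: "('h::complex_inner \<Rightarrow> 'h) \<Rightarrow> bool" where
  "op_pos T \<longleftrightarrow> (\<forall>x. cnonneg (cinner (T x) x))"

definition positive_map :: "('a::cstar_algebra \<Rightarrow> 'h::complex_inner \<Rightarrow> 'h) \<Rightarrow> bool" where
  "positive_map \<psi> \<longleftrightarrow>
     (\<forall>a. bounded_clinear_op (\<psi> a)) \<and>
     (\<forall>a b. \<psi> (a + b) = (\<lambda>h. \<psi> a h + \<psi> b h)) \<and>
     (\<forall>c a. \<psi> (c *\<^sub>C a) = (\<lambda>h. c *\<^sub>C \<psi> a h)) \<and>
     (\<forall>a. cstar_pos a \<longrightarrow> op_pos (\<psi> a))"

text \<open>Positivity of an n\<times>n operator matrix [T i j] acting on the direct sum of n
  copies of H.\<close>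
definition opmat_pos :: "nat \<Rightarrow> (nat \<Rightarrow> nat \<Rightarrow> 'h::complex_inner \<Rightarrow> 'h) \<Rightarrow> bool" where
  "opmat_pos n T \<longleftrightarrow>
     (\<forall>x::nat \<Rightarrow> 'h. cnonneg (\<Sum>i<n. \<Sum>j<n. cinner (T i j (x j)) (x i)))"

text \<open>Complex k\<times>k matrices are represented as functions nat \<Rightarrow> nat \<Rightarrow> complex,
  only entries with indices < k being relevant.\<close>

definition cvec_norm :: "nat \<Rightarrow> (nat \<Rightarrow> complex) \<Rightarrow> real" where
  "cvec_norm k v = sqrt (\<Sum>p<k. (cmod (v p))\<^sup>2)"

definition cmat_norm :: "nat \<Rightarrow> (nat \<Rightarrow> nat \<Rightarrow> complex) \<Rightarrow> real" where
  "cmat_norm k X = Sup {cvec_norm k (\<lambda>p. \<Sum>q<k. X p q * v q) | v. cvec_norm k v \<le> 1}"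

text \<open>Positivity of an element of M_m(M_k(C)) = M_{mk}(C) (block matrix), as a
  positive semidefinite matrix.\<close>
definition block_cmat_pos :: "nat \<Rightarrow> nat \<Rightarrow> (nat \<Rightarrow> nat \<Rightarrow> nat \<Rightarrow> nat \<Rightarrow> complex) \<Rightarrow> bool" where
  "block_cmat_pos m k X \<longleftrightarrow>
     (\<forall>v::nat \<Rightarrow> nat \<Rightarrow> complex.
        cnonneg (\<Sum>i<m. \<Sum>j<m. \<Sum>p<k. \<Sum>q<k. cnj (v i p) * X i j p q * v j q))"

definition ccp_to_mat :: "nat \<Rightarrow> ('a::cstar_algebra \<Rightarrow> nat \<Rightarrow> nat \<Rightarrow> complex) \<Rightarrow> bool" where
  "ccp_to_mat k \<phi> \<longleftrightarrow>
     (\<forall>a b. \<forall>p<k. \<forall>q<k. \<phi> (a + b) p q = \<phi> a p q + \<phi> b p q) \<and>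
     (\<forall>c a. \<forall>p<k. \<forall>q<k. \<phi> (c *\<^sub>C a) p q = c * \<phi> a p q) \<and>
     (\<forall>m X. mat_pos m X \<longrightarrow> block_cmat_pos m k (\<lambda>i j. \<phi> (X i j))) \<and>
     (\<forall>a. cmat_norm k (\<phi> a) \<le> norm a)"

definition ccp_from_mat :: "nat \<Rightarrow> ((nat \<Rightarrow> nat \<Rightarrow> complex) \<Rightarrow> 'a::cstar_algebra) \<Rightarrow> bool" where
  "ccp_from_mat k \<theta> \<longleftrightarrow>
     (\<forall>X Y. (\<forall>p<k. \<forall>q<k. X p q = Y p q) \<longrightarrow> \<theta> X = \<theta> Y) \<and>
     (\<forall>X Y. \<theta> (\<lambda>p q. X p q + Y p q) = \<theta> X + \<theta> Y) \<and>
     (\<forall>c X. \<theta> (\<lambda>p q. c * X p q) = c *\<^sub>C \<theta> X) \<and>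
     (\<forall>m X. block_cmat_pos m k X \<longrightarrow> mat_pos m (\<lambda>i j. \<theta> (X i j))) \<and>
     (\<forall>X. norm (\<theta> X) \<le> cmat_norm k X)"

text \<open>A C*-algebra is nuclear iff its identity map is approximated in the point-norm
  topology by c.c.p. maps factoring through matrix algebras (Brown--Ozawa, Def. 2.3.1/2.3.2).\<close>
definition nuclear :: "'a::cstar_algebra itself \<Rightarrow> bool" where
  "nuclear _ \<longleftrightarrow>
     (\<forall>F::'a set. \<forall>\<epsilon>>0. finite F \<longrightarrow>
        (\<exists>k \<phi> \<theta>. ccp_to_mat k \<phi> \<and> ccp_from_mat k \<theta> \<and>
           (\<forall>a\<in>F. norm (\<theta> (\<phi> a) - a) < \<epsilon>)))"

end

theory Submission
  imports Defs "HOL-Computational_Algebra.Formal_Power_Series"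
begin

(* Nuclearity provides c.c.p. maps phi : A -> M_k and theta : M_k -> A with theta (phi b) close
   to b on the finitely many entries a(d), |d| < n. The matrices G(d) = phi (a d) form a positive
   block Toeplitz matrix and psi o theta is a positive map on M_k, so it suffices to treat
   scalar matrix coefficients. A positive block Toeplitz matrix of size n extends to positive
   block Toeplitz matrices of every size M (a positive completion of two overlapping diagonal
   blocks, by Schur complements). Compressing the size-M extension to the vectors (z^a u) for the
   (M+n)-th roots of unity z and averaging gives, Fejer-style,
   sum_{i,j} (M - |i-j|) <psi(theta(G(i-j))) x_j, x_i> >= 0; dividing by M and letting M -> oo
   yields positivity for G. Finally positive maps are bounded (1 + h = b* b for self-adjoint
   h of norm < 1, via the binomial series), so positivity survives the approximation. *)

context complex_vector
begin

lemma cscale_zero_right [simp]: "c *\<^sub>C 0 = 0"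
  using cscale_add_right[of c 0 0] by simp

lemma cscale_zero_left [simp]: "0 *\<^sub>C x = 0"
  using cscale_add_left[of 0 0 x] by simp

lemma cscale_minus_left: "(- c) *\<^sub>C x = - (c *\<^sub>C x)"
  using cscale_add_left[of c "- c" x] by (simp add: add.commute eq_neg_iff_add_eq_0)

lemma cscale_minus_right: "c *\<^sub>C (- x) = - (c *\<^sub>C x)"
  using cscale_add_right[of c x "- x"] by (simp add: add.commute eq_neg_iff_add_eq_0)

lemma cscale_sum_right: "c *\<^sub>C (\<Sum>i\<in>S. f i) = (\<Sum>i\<in>S. c *\<^sub>C f i)"
  by (induction S rule: infinite_finite_induct) (auto simp: cscale_add_right)

end

context cstar_algebra
begin

lemma adj_zero [simp]: "adj 0 = 0"
  using adj_add[of 0 0] by simp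

lemma adj_minus: "adj (- x) = - adj x"
  using adj_add[of x "- x"] by (simp add: add.commute eq_neg_iff_add_eq_0)

lemma adj_diff: "adj (x - y) = adj x - adj y"
  using adj_add[of x "- y"] by (simp add: adj_minus)

lemma adj_scaleR: "adj (r *\<^sub>R x) = r *\<^sub>R adj x"
  by (simp add: scaleR_cscale adj_cscale)

lemma norm_adj [simp]: "norm (adj x) = norm x"
proof -
  have le: "norm y \<le> norm (adj y)" for y
  proof (cases "y = 0")
    case False
    have "norm y * norm y = norm (adj y * y)" by (simp add: cstar_identity)
    also have "\<dots> \<le> norm (adj y) * norm y" by (rule norm_mult_ineq)
    finally show ?thesis using False by simp
  qed simp
  show ?thesis using le[of x] le[of "adj x"] by (simp add: adj_adj)
qed

lemma adj_one [simp]: "adj 1 = 1"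
  using adj_mult[of "adj 1" 1] by (simp add: adj_adj)

lemma adj_power: "adj h = h \<Longrightarrow> adj (h ^ m) = h ^ m"
  by (induction m) (simp_all add: adj_mult power_commutes)

end

context complex_inner
begin

lemma cinner_zero_left [simp]: "cinner 0 y = 0"
  using cinner_add_left[of 0 0 y] by simp

lemma cinner_zero_right [simp]: "cinner x 0 = 0"
  using cinner_commute[of 0 x] by simp

lemma cinner_add_right: "cinner x (y + z) = cinner x y + cinner x z"
  using cinner_add_left[of y z x] cinner_commute by (metis complex_cnj_add)

lemma cinner_cscale_right: "cinner x (c *\<^sub>C y) = cnj c * cinner x y"
  using cinner_cscale_left[of c y x] cinner_commute by (metis complex_cnj_mult)

lemma cinner_diff_left: "cinner (x - y) z = cinner x z - cinner y z"
  using cinner_add_left[of "x - y" y z] by (simp add: eq_diff_eq)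

lemma cinner_sum_left: "cinner (\<Sum>i\<in>S. f i) z = (\<Sum>i\<in>S. cinner (f i) z)"
  by (induction S rule: infinite_finite_induct) (auto simp: cinner_add_left)

lemma cinner_sum_right: "cinner z (\<Sum>i\<in>S. f i) = (\<Sum>i\<in>S. cinner z (f i))"
  by (induction S rule: infinite_finite_induct) (auto simp: cinner_add_right)

end

lemma cnonneg_sum: "(\<And>i. i \<in> S \<Longrightarrow> cnonneg (f i)) \<Longrightarrow> cnonneg (\<Sum>i\<in>S. f i)"
  by (induction S rule: infinite_finite_induct) (auto simp: cnonneg_def)

lemma closed_cnonneg: "closed {z. cnonneg z}"
  unfolding cnonneg_def
  by (intro closed_Collect_conj closed_Collect_eq closed_Collect_le continuous_intros)

section \<open>Positive maps are bounded\<close>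

lemma bounded_linear_adj: "bounded_linear (adj :: 'a::cstar_algebra \<Rightarrow> 'a)"
  by (rule bounded_linear_intro[where K=1]) (auto simp: adj_add adj_scaleR)

lemma abs_gbinomial_half_le_1: "\<bar>(1/2::real) gchoose k\<bar> \<le> 1"
proof (induction k)
  case (Suc k)
  have rec: "of_nat (Suc k) * ((1/2::real) gchoose Suc k) = (1/2 - of_nat k) * ((1/2) gchoose k)"
    by (simp only: gbinomial_absorption gbinomial_absorb_comp)
  have "(1 + real k) * \<bar>(1/2::real) gchoose Suc k\<bar> = \<bar>1/2 - real k\<bar> * \<bar>(1/2) gchoose k\<bar>"
    using arg_cong[OF rec, of abs] by (simp add: abs_mult)
  also have "\<dots> \<le> (1 + real k) * 1"
    using Suc by (intro mult_mono) auto
  finally show ?case by simp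
qed simp

text \<open>The binomial series of \<open>sqrt (1 + h)\<close> converges for \<open>norm h < 1\<close> and squares to
  \<open>1 + h\<close> by Vandermonde's identity.\<close>
lemma cstar_pos_one_plus:
  fixes h :: "'a::cstar_algebra"
  assumes sa: "adj h = h" and nh: "norm h < 1"
  shows "cstar_pos (1 + h)"
proof -
  define f where "f m = ((1/2::real) gchoose m) *\<^sub>R h ^ m" for m
  have summable: "summable (\<lambda>m. norm (f m))"
  proof (rule summable_comparison_test[OF _ summable_geometric[of "norm h"]])
    have "norm (f m) \<le> 1 * norm h ^ m" for m
      unfolding f_def norm_scaleR
      by (intro mult_mono abs_gbinomial_half_le_1 norm_power_ineq) auto
    then show "\<exists>N. \<forall>m\<ge>N. norm (norm (f m)) \<le> norm h ^ m"
      by simp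
  qed (use nh in simp)
  define s where "s = (\<Sum>m. f m)"
  have "adj s = (\<Sum>m. adj (f m))"
    unfolding s_def by (rule bounded_linear.suminf[OF bounded_linear_adj summable_norm_cancel[OF summable]])
  also have "(\<lambda>m. adj (f m)) = f"
    by (auto simp: f_def adj_scaleR adj_power sa)
  finally have adj_s: "adj s = s" by (simp add: s_def)
  have "s * s = (\<Sum>k. \<Sum>i\<le>k. f i * f (k - i))"
    unfolding s_def by (rule Cauchy_product[OF summable summable])
  also have "(\<lambda>k. \<Sum>i\<le>k. f i * f (k - i)) = (\<lambda>k. ((1::real) gchoose k) *\<^sub>R h ^ k)"
  proof
    fix k
    have "(\<Sum>i\<le>k. f i * f (k - i)) = (\<Sum>i\<le>k. ((1/2::real) gchoose i) * ((1/2) gchoose (k - i))) *\<^sub>R h ^ k"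
      by (auto simp: f_def scaleR_sum_left power_add[symmetric] intro!: sum.cong)
    then show "(\<Sum>i\<le>k. f i * f (k - i)) = ((1::real) gchoose k) *\<^sub>R h ^ k"
      using gbinomial_Vandermonde[of "1/2::real" "1/2" k] by (simp add: atLeast0AtMost)
  qed
  also have "(\<Sum>k. ((1::real) gchoose k) *\<^sub>R h ^ k) = (\<Sum>k<2. ((1::real) gchoose k) *\<^sub>R h ^ k)"
    by (rule suminf_finite) (auto simp: binomial_gbinomial[of 1, symmetric, simplified] binomial_eq_0)
  finally have "s * s = 1 + h" by (simp add: numeral_2_eq_2)
  then show ?thesis
    unfolding cstar_pos_def using adj_s by metis
qed

locale positive_linear_map =
  fixes \<psi> :: "'a::cstar_algebra \<Rightarrow> 'h::complex_inner \<Rightarrow> 'h"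
  assumes positive_map: "positive_map \<psi>"
begin

lemma add: "\<psi> (a + b) h = \<psi> a h + \<psi> b h"
  using positive_map unfolding positive_map_def by metis

lemma cscale: "\<psi> (c *\<^sub>C a) h = c *\<^sub>C \<psi> a h"
  using positive_map unfolding positive_map_def by metis

lemma diff: "\<psi> (a - b) h = \<psi> a h - \<psi> b h"
  using add[of "a - b" b h] by (simp add: eq_diff_eq)

lemma apply_add: "\<psi> a (x + y) = \<psi> a x + \<psi> a y"
  using positive_map unfolding positive_map_def bounded_clinear_op_def by metis

lemma apply_cscale: "\<psi> a (c *\<^sub>C x) = c *\<^sub>C \<psi> a x"
  using positive_map unfolding positive_map_def bounded_clinear_op_def by metis

lemma form_nonneg: "cstar_pos b \<Longrightarrow> cnonneg (cinner (\<psi> b w) w)"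
  using positive_map unfolding positive_map_def op_pos_def by blast

text \<open>Since \<open>1 \<plusminus> h\<close> are positive, \<open>\<langle>\<psi>(h)w, w\<rangle>\<close> is real and dominated by \<open>\<langle>\<psi>(1)w, w\<rangle>\<close>.\<close>
lemma form_selfadjoint_bound:
  assumes "adj h = h" and "norm h < 1"
  shows "cmod (cinner (\<psi> h w) w) \<le> Re (cinner (\<psi> 1 w) w)"
proof -
  have "cstar_pos (1 + h)" "cstar_pos (1 + - h)"
    using assms cstar_pos_one_plus[of h] cstar_pos_one_plus[of "- h"] by (simp_all add: adj_minus)
  then have "cnonneg (cinner (\<psi> 1 w) w + cinner (\<psi> h w) w)"
    "cnonneg (cinner (\<psi> 1 w) w - cinner (\<psi> h w) w)"
    using form_nonneg[of "1 + h" w] form_nonneg[of "1 + - h" w]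
    by (simp_all add: add diff[of 1 h, simplified] cinner_add_left cinner_diff_left)
  then show ?thesis by (auto simp: cnonneg_def cmod_def)
qed

lemma form_bound_unit_ball:
  assumes b: "norm b < 1"
  shows "cmod (cinner (\<psi> b w) w) \<le> 2 * Re (cinner (\<psi> 1 w) w)"
proof -
  define h where "h = (1/2) *\<^sub>C (b + adj b)"
  define k where "k = (- (\<i>/2)) *\<^sub>C (b - adj b)"
  have b_eq: "b = h + \<i> *\<^sub>C k"
  proof -
    have "h + \<i> *\<^sub>C k = (1/2) *\<^sub>C (b + adj b) + (1/2) *\<^sub>C (b - adj b)"
      by (simp add: h_def k_def cscale_cscale)
    also have "\<dots> = (1/2) *\<^sub>C (b + b)"
      by (simp flip: cscale_add_right)
    also have "\<dots> = b"
      by (simp only: cscale_add_right flip: cscale_add_left) (simp add: cscale_one)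
    finally show ?thesis ..
  qed
  have "norm h \<le> 1/2 * (norm b + norm (adj b))" "norm k \<le> 1/2 * (norm b + norm (adj b))"
    using norm_triangle_ineq[of b "adj b"] norm_triangle_ineq4[of b "adj b"]
    by (simp_all add: h_def k_def norm_cscale norm_divide)
  then have "norm h < 1" "norm k < 1"
    using b by simp_all
  moreover have "adj h = h"
    by (simp add: h_def adj_cscale adj_add adj_adj add.commute)
  moreover have "adj k = k"
  proof -
    have "adj k = (\<i>/2) *\<^sub>C (- (b - adj b))"
      by (simp add: k_def adj_cscale adj_diff adj_adj)
    also have "\<dots> = (- (\<i>/2)) *\<^sub>C (b - adj b)"
      by (simp only: cscale_minus_right cscale_minus_left)
    finally show ?thesis
      by (simp only: k_def)
  qed
  moreover have "cinner (\<psi> b w) w = cinner (\<psi> h w) w + \<i> * cinner (\<psi> k w) w"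
    by (simp add: b_eq add cscale cinner_add_left cinner_cscale_left)
  then have "cmod (cinner (\<psi> b w) w) \<le> cmod (cinner (\<psi> h w) w) + cmod (cinner (\<psi> k w) w)"
    by (metis norm_triangle_ineq norm_mult norm_ii mult_1)
  ultimately show ?thesis
    using form_selfadjoint_bound[of h w] form_selfadjoint_bound[of k w] by simp
qed

lemma form_diag_bound: "cmod (cinner (\<psi> b w) w) \<le> 4 * Re (cinner (\<psi> 1 w) w) * norm b"
proof (cases "b = 0")
  case False
  define t where "t = 1 / (2 * norm b)"
  have t: "t > 0"
    using False by (simp add: t_def)
  have "norm (complex_of_real t *\<^sub>C b) = 1/2"
    unfolding norm_cscale norm_of_real using t False by (simp add: t_def)
  then have "cmod (cinner (\<psi> (complex_of_real t *\<^sub>C b) w) w) \<le> 2 * Re (cinner (\<psi> 1 w) w)"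
    by (intro form_bound_unit_ball) simp
  then have "t * cmod (cinner (\<psi> b w) w) \<le> 2 * Re (cinner (\<psi> 1 w) w)"
    using t by (simp add: cscale cinner_cscale_left norm_mult)
  then show ?thesis using False t by (simp add: t_def field_simps)
qed (simp add: cscale[of 0 0, simplified])

lemma form_bounded: "\<exists>C. \<forall>b. cmod (cinner (\<psi> b y) z) \<le> C * norm b"
proof -
  define q where "q c = Re (cinner (\<psi> 1 (y + c *\<^sub>C z)) (y + c *\<^sub>C z))" for c
  define Q where "Q b c = cinner (\<psi> b (y + c *\<^sub>C z)) (y + c *\<^sub>C z)" for b c
  have polarization: "4 * cinner (\<psi> b y) z = Q b 1 + \<i> * Q b \<i> - Q b (-1) - \<i> * Q b (-\<i>)" for b
    by (simp add: Q_def apply_add apply_cscale cinner_add_left cinner_add_right cinner_cscale_left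
        cinner_cscale_right algebra_simps)
  have "cmod (cinner (\<psi> b y) z) \<le> (q 1 + q \<i> + q (-1) + q (-\<i>)) * norm b" for b
  proof -
    have "4 * cmod (cinner (\<psi> b y) z) = cmod (Q b 1 + \<i> * Q b \<i> - Q b (-1) - \<i> * Q b (-\<i>))"
      by (simp flip: polarization add: norm_mult)
    also have "\<dots> \<le> cmod (Q b 1) + cmod (Q b \<i>) + cmod (Q b (-1)) + cmod (Q b (-\<i>))"
      using norm_triangle_ineq4[of "Q b 1 + \<i> * Q b \<i> - Q b (-1)" "\<i> * Q b (-\<i>)"]
        norm_triangle_ineq4[of "Q b 1 + \<i> * Q b \<i>" "Q b (-1)"] norm_triangle_ineq[of "Q b 1" "\<i> * Q b \<i>"]
      by (simp add: norm_mult)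
    also have "\<dots> \<le> (4 * q 1 + 4 * q \<i> + 4 * q (-1) + 4 * q (-\<i>)) * norm b"
      unfolding Q_def q_def distrib_right by (intro add_mono form_diag_bound)
    finally show ?thesis by (simp add: algebra_simps)
  qed
  then show ?thesis by blast
qed

end

section \<open>Positive semidefinite kernels\<close>

definition kernel_form :: "'i set \<Rightarrow> ('i \<Rightarrow> 'i \<Rightarrow> complex) \<Rightarrow> ('i \<Rightarrow> complex) \<Rightarrow> ('i \<Rightarrow> complex) \<Rightarrow> complex"
  where "kernel_form S K u v = (\<Sum>x\<in>S. \<Sum>y\<in>S. cnj (u x) * K x y * v y)"

definition psd_kernel :: "'i set \<Rightarrow> ('i \<Rightarrow> 'i \<Rightarrow> complex) \<Rightarrow> bool"
  where "psd_kernel S K \<longleftrightarrow> (\<forall>v. cnonneg (kernel_form S K v v))"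

definition kronecker_delta :: "'i \<Rightarrow> 'i \<Rightarrow> complex"
  where "kronecker_delta a x = (if x = a then 1 else 0)"

lemma kernel_form_add_left: "kernel_form S K (\<lambda>x. u x + w x) v = kernel_form S K u v + kernel_form S K w v"
  by (simp add: kernel_form_def algebra_simps sum.distrib)

lemma kernel_form_add_right: "kernel_form S K u (\<lambda>x. v x + w x) = kernel_form S K u v + kernel_form S K u w"
  by (simp add: kernel_form_def algebra_simps sum.distrib)

lemma kernel_form_scale_left: "kernel_form S K (\<lambda>x. c * u x) v = cnj c * kernel_form S K u v"
  by (simp add: kernel_form_def algebra_simps sum_distrib_left)

lemma kernel_form_scale_right: "kernel_form S K u (\<lambda>x. c * v x) = c * kernel_form S K u v"
  by (simp add: kernel_form_def algebra_simps sum_distrib_left)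

lemma kernel_form_delta_left:
  assumes "finite S" "a \<in> S"
  shows "kernel_form S K (kronecker_delta a) v = (\<Sum>y\<in>S. K a y * v y)"
proof -
  have "kernel_form S K (kronecker_delta a) v = (\<Sum>x\<in>S. if x = a then (\<Sum>y\<in>S. K x y * v y) else 0)"
    unfolding kernel_form_def by (intro sum.cong) (auto simp: kronecker_delta_def)
  then show ?thesis using assms by simp
qed

lemma kernel_form_delta_right:
  "finite S \<Longrightarrow> b \<in> S \<Longrightarrow> kernel_form S K u (kronecker_delta b) = (\<Sum>x\<in>S. cnj (u x) * K x b)"
  by (simp add: kernel_form_def kronecker_delta_def if_distrib cong: if_cong)

lemma kernel_form_delta:
  "finite S \<Longrightarrow> a \<in> S \<Longrightarrow> b \<in> S \<Longrightarrow> kernel_form S K (kronecker_delta a) (kronecker_delta b) = K a b"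
  by (simp add: kernel_form_delta_left kronecker_delta_def if_distrib cong: if_cong)

lemma psd_kernel_two_point:
  assumes "psd_kernel S K" "finite S" "a \<in> S" "b \<in> S"
  shows "cnonneg (cnj c * c * K a a + cnj c * d * K a b + cnj d * c * K b a + cnj d * d * K b b)"
proof -
  define v where "v x = c * kronecker_delta a x + d * kronecker_delta b x" for x
  have "kernel_form S K v v = cnj c * c * K a a + cnj c * d * K a b + cnj d * c * K b a + cnj d * d * K b b"
    using assms(2-4) unfolding v_def
    by (simp add: kernel_form_add_left kernel_form_add_right kernel_form_scale_left
        kernel_form_scale_right kernel_form_delta algebra_simps)
  then show ?thesis
    using assms(1) unfolding psd_kernel_def by metis
qed

lemma psd_kernel_diag: "psd_kernel S K \<Longrightarrow> finite S \<Longrightarrow> a \<in> S \<Longrightarrow> cnonneg (K a a)"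
  using psd_kernel_two_point[of S K a a 1 0] by simp

lemma psd_kernel_hermitian:
  assumes "psd_kernel S K" "finite S" "a \<in> S" "b \<in> S"
  shows "K b a = cnj (K a b)"
proof -
  have "Im (K a a) = 0" "Im (K b b) = 0"
    using psd_kernel_diag[OF assms(1,2)] assms(3,4) by (auto simp: cnonneg_def)
  moreover have "Im (K a a + K a b + K b a + K b b) = 0"
    using psd_kernel_two_point[OF assms, of 1 1] by (simp add: cnonneg_def)
  moreover have "Im (K a a + \<i> * K a b - \<i> * K b a + K b b) = 0"
    using psd_kernel_two_point[OF assms, of 1 \<i>] by (simp add: cnonneg_def)
  ultimately show ?thesis by (simp add: complex_eq_iff)
qed

text \<open>Test the form at \<open>v = c \<delta>\<^sub>a + \<delta>\<^sub>b\<close> with \<open>c = -t K a b\<close> and \<open>t\<close> large.\<close>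
lemma psd_kernel_zero_row:
  assumes psd: "psd_kernel S K" and S: "finite S" "a \<in> S" "b \<in> S" and zero: "K a a = 0"
  shows "K a b = 0"
proof (rule ccontr)
  assume "K a b \<noteq> 0"
  define r where "r = (Re (K a b))\<^sup>2 + (Im (K a b))\<^sup>2"
  have r: "r > 0"
    using \<open>K a b \<noteq> 0\<close> by (simp add: r_def sum_power2_gt_zero_iff complex_eq_iff)
  define t where "t = (Re (K b b) + 1) / (2 * r)"
  define c where "c = - (complex_of_real t * K a b)"
  have "cnj c * K a b = - complex_of_real (t * r)" "c * K b a = - complex_of_real (t * r)"
    using psd_kernel_hermitian[OF psd S]
    by (simp_all add: c_def r_def complex_mult_cnj mult.commute mult.left_commute)
  then have "cnonneg (complex_of_real (- 2 * t * r) + K b b)"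
    using psd_kernel_two_point[OF psd S, of c 1] zero by (simp add: algebra_simps)
  then have "0 \<le> - 2 * t * r + Re (K b b)"
    by (simp add: cnonneg_def)
  also have "\<dots> = -1" using r by (simp add: t_def field_simps)
  finally show False by simp
qed

lemma psd_kernel_zero_col:
  assumes "psd_kernel S K" "finite S" "a \<in> S" "b \<in> S" "K a a = 0"
  shows "K b a = 0"
  using psd_kernel_zero_row[OF assms] psd_kernel_hermitian[OF assms(1-4)] by simp

lemma psd_kernel_add: "psd_kernel S K1 \<Longrightarrow> psd_kernel S K2 \<Longrightarrow> psd_kernel S (\<lambda>x y. K1 x y + K2 x y)"
  by (simp add: psd_kernel_def kernel_form_def algebra_simps sum.distrib cnonneg_def)

lemma psd_kernel_rank_one:
  assumes "r \<ge> 0"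
  shows "psd_kernel S (\<lambda>x y. complex_of_real r * g x * cnj (g y))"
  unfolding psd_kernel_def
proof
  fix v
  define s where "s = (\<Sum>y\<in>S. cnj (g y) * v y)"
  have "kernel_form S (\<lambda>x y. complex_of_real r * g x * cnj (g y)) v v
      = complex_of_real r * ((\<Sum>x\<in>S. cnj (v x) * g x) * s)"
    unfolding kernel_form_def s_def sum_product
    by (simp only: sum_distrib_left) (intro sum.cong refl, simp add: algebra_simps)
  also have "(\<Sum>x\<in>S. cnj (v x) * g x) = cnj s"
    by (simp add: s_def mult.commute)
  also have "cnj s * s = complex_of_real ((Re s)\<^sup>2 + (Im s)\<^sup>2)"
    by (simp add: complex_mult_cnj mult.commute)
  finally show "cnonneg (kernel_form S (\<lambda>x y. complex_of_real r * g x * cnj (g y)) v v)"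
    using assms by (simp add: cnonneg_def)
qed

lemma psd_kernel_cong:
  "(\<And>x y. x \<in> S \<Longrightarrow> y \<in> S \<Longrightarrow> K x y = K' x y) \<Longrightarrow> psd_kernel S K \<longleftrightarrow> psd_kernel S K'"
  unfolding psd_kernel_def kernel_form_def by (simp cong: sum.cong)

lemma kernel_form_restrict:
  assumes "finite S" "T \<subseteq> S"
  shows "kernel_form S (\<lambda>x y. if x \<in> T \<and> y \<in> T then K x y else 0) u v = kernel_form T K u v"
proof -
  have "kernel_form S (\<lambda>x y. if x \<in> T \<and> y \<in> T then K x y else 0) u v
      = (\<Sum>x\<in>S. if x \<in> T then (\<Sum>y\<in>S. if y \<in> T then cnj (u x) * K x y * v y else 0) else 0)"
    unfolding kernel_form_def by (auto intro!: sum.cong)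
  also have "\<dots> = kernel_form T K u v"
    using assms by (simp add: kernel_form_def sum.If_cases Int_absorb1)
  finally show ?thesis .
qed

lemma psd_kernel_extend_zero:
  "finite S \<Longrightarrow> T \<subseteq> S \<Longrightarrow> psd_kernel T K \<Longrightarrow>
    psd_kernel S (\<lambda>x y. if x \<in> T \<and> y \<in> T then K x y else 0)"
  by (simp add: psd_kernel_def kernel_form_restrict)

lemma psd_kernel_subset:
  assumes "finite S" "T \<subseteq> S" "psd_kernel S K"
  shows "psd_kernel T K"
  unfolding psd_kernel_def
proof
  fix v
  define w :: "_ \<Rightarrow> complex" where "w x = (if x \<in> T then v x else 0)" for x
  have "kernel_form S K w w = kernel_form S (\<lambda>x y. if x \<in> T \<and> y \<in> T then K x y else 0) v v"
    unfolding kernel_form_def w_def by (intro sum.cong refl) auto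
  then have "kernel_form T K v v = kernel_form S K w w"
    by (simp add: kernel_form_restrict[OF assms(1,2)])
  then show "cnonneg (kernel_form T K v v)"
    using assms(3) unfolding psd_kernel_def by simp
qed

lemma psd_kernel_image:
  assumes "inj_on f S" "psd_kernel S (\<lambda>x y. K (f x) (f y))"
  shows "psd_kernel (f ` S) K"
  unfolding psd_kernel_def
proof
  fix v
  have "kernel_form (f ` S) K v v = kernel_form S (\<lambda>x y. K (f x) (f y)) (v \<circ> f) (v \<circ> f)"
    by (simp add: kernel_form_def sum.reindex[OF assms(1)])
  then show "cnonneg (kernel_form (f ` S) K v v)"
    using assms(2) unfolding psd_kernel_def by simp
qed

text \<open>When the pivot \<open>K c c\<close> vanishes, division by zero makes the Schur complement equal to \<open>K\<close>.\<close>
definition schur_compl :: "('i \<Rightarrow> 'i \<Rightarrow> complex) \<Rightarrow> 'i \<Rightarrow> 'i \<Rightarrow> 'i \<Rightarrow> complex"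
  where "schur_compl K c x y = K x y - K x c * K c y / K c c"

lemma psd_kernel_schur_compl:
  assumes psd: "psd_kernel S K" and S: "finite S" "c \<in> S"
  shows "psd_kernel S (schur_compl K c)"
proof (cases "K c c = 0")
  case True
  then have "schur_compl K c = K"
    by (simp add: fun_eq_iff schur_compl_def)
  then show ?thesis using psd by simp
next
  case False
  obtain r where r: "K c c = complex_of_real r" "r > 0"
    using psd_kernel_diag[OF psd S] False
    by (auto simp: cnonneg_def complex_eq_iff intro!: exI[of _ "Re (K c c)"])
  show ?thesis
    unfolding psd_kernel_def
  proof
    fix v
    define s where "s = kernel_form S K (kronecker_delta c) v"
    have s: "s = (\<Sum>y\<in>S. K c y * v y)"
      by (simp add: s_def kernel_form_delta_left[OF S])
    have s': "kernel_form S K v (kronecker_delta c) = cnj s"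
      using psd_kernel_hermitian[OF psd S(1) _ S(2)]
      by (simp add: kernel_form_delta_right[OF S] s mult.commute)
    define t where "t = - s / K c c"
    have "kernel_form S K (\<lambda>x. v x + t * kronecker_delta c x) (\<lambda>x. v x + t * kronecker_delta c x)
        = kernel_form S K v v + t * cnj s + cnj t * s + cnj t * t * K c c"
      by (simp add: kernel_form_add_left kernel_form_add_right kernel_form_scale_left
          kernel_form_scale_right kernel_form_delta[OF S S(2)] s' s_def[symmetric] algebra_simps)
    also have "\<dots> = kernel_form S K v v - cnj s * s / K c c"
      using r by (simp add: t_def field_simps)
    also have "cnj s * s / K c c = kernel_form S (\<lambda>x y. K x c * K c y / K c c) v v"
    proof -
      have "kernel_form S (\<lambda>x y. K x c * K c y / K c c) v v
          = (\<Sum>x\<in>S. cnj (v x) * K x c) * (\<Sum>y\<in>S. K c y * v y) / K c c"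
        unfolding kernel_form_def sum_product sum_divide_distrib
        by (intro sum.cong refl) (simp add: algebra_simps)
      then show ?thesis
        using s' by (simp add: kernel_form_delta_right[OF S] s)
    qed
    also have "kernel_form S K v v - \<dots> = kernel_form S (schur_compl K c) v v"
      by (simp add: kernel_form_def schur_compl_def sum_subtractf algebra_simps)
    finally show "cnonneg (kernel_form S (schur_compl K c) v v)"
      using psd unfolding psd_kernel_def by metis
  qed
qed

lemma schur_compl_pivot_row:
  "psd_kernel S K \<Longrightarrow> finite S \<Longrightarrow> c \<in> S \<Longrightarrow> y \<in> S \<Longrightarrow> schur_compl K c c y = 0"
  using psd_kernel_zero_row[of S K c y] by (cases "K c c = 0") (auto simp: schur_compl_def)

lemma schur_compl_pivot_col:
  "psd_kernel S K \<Longrightarrow> finite S \<Longrightarrow> c \<in> S \<Longrightarrow> x \<in> S \<Longrightarrow> schur_compl K c x c = 0"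
  using psd_kernel_zero_col[of S K c x] by (cases "K c c = 0") (auto simp: schur_compl_def)

lemma schur_compl_plus_rank_one:
  assumes "psd_kernel S K" "finite S" "c \<in> S" "x \<in> S" "y \<in> S"
  shows "schur_compl K c x y + complex_of_real (1 / Re (K c c)) * K x c * cnj (K y c) = K x y"
proof -
  have "K c c = complex_of_real (Re (K c c))"
    using psd_kernel_diag[OF assms(1-3)] by (simp add: cnonneg_def complex_eq_iff)
  moreover have "cnj (K y c) = K c y"
    using psd_kernel_hermitian[OF assms(1,2,5,3)] by simp
  ultimately show ?thesis
    by (cases "K c c = 0") (auto simp: schur_compl_def field_simps)
qed

section \<open>Positive completions and block Toeplitz extensions\<close>

text \<open>Undoing a Schur complement at the pivot \<open>c\<close>: a completion \<open>L\<close> of the two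
  Schur complements, plus the rank-one term they removed, completes the original kernels.\<close>
lemma psd_kernel_completion_add_pivot:
  assumes fin: "finite (A \<union> insert c C \<union> E)" and AE: "A \<inter> E = {}"
    and K1: "psd_kernel (A \<union> insert c C) K1" and K2: "psd_kernel (insert c C \<union> E) K2"
    and agree: "\<forall>x\<in>insert c C. \<forall>y\<in>insert c C. K1 x y = K2 x y"
    and L: "psd_kernel (A \<union> insert c C \<union> E) L"
    and L1: "\<forall>x\<in>A \<union> insert c C. \<forall>y\<in>A \<union> insert c C. L x y = schur_compl K1 c x y"
    and L2: "\<forall>x\<in>C \<union> E. \<forall>y\<in>C \<union> E. L x y = schur_compl K2 c x y"
  shows "\<exists>K. psd_kernel (A \<union> insert c C \<union> E) K
           \<and> (\<forall>x\<in>A \<union> insert c C. \<forall>y\<in>A \<union> insert c C. K x y = K1 x y)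
           \<and> (\<forall>x\<in>insert c C \<union> E. \<forall>y\<in>insert c C \<union> E. K x y = K2 x y)"
proof -
  let ?S1 = "A \<union> insert c C" and ?S2 = "insert c C \<union> E"
  have S: "finite ?S1" "finite ?S2" "c \<in> ?S1" "c \<in> ?S2" and c: "c \<in> A \<union> insert c C \<union> E"
    using fin by auto
  have "L c c = 0"
    using L1 schur_compl_pivot_row[OF K1 S(1,3,3)] by simp
  then have L2': "L x y = schur_compl K2 c x y" if x: "x \<in> ?S2" and y: "y \<in> ?S2" for x y
  proof (cases "x = c \<or> y = c")
    case True
    have "x \<in> A \<union> insert c C \<union> E" "y \<in> A \<union> insert c C \<union> E"
      using x y by auto
    then show ?thesis
      using True psd_kernel_zero_row[OF L fin c] psd_kernel_zero_col[OF L fin c] \<open>L c c = 0\<close>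
        schur_compl_pivot_row[OF K2 S(2,4) y] schur_compl_pivot_col[OF K2 S(2,4) x]
      by auto
  qed (use L2 x y in simp)
  define g where "g x = (if x \<in> ?S1 then K1 x c else K2 x c)" for x
  define K where "K x y = L x y + complex_of_real (1 / Re (K1 c c)) * g x * cnj (g y)" for x y
  have "Re (K1 c c) \<ge> 0"
    using psd_kernel_diag[OF K1 S(1,3)] by (simp add: cnonneg_def)
  then have "psd_kernel (A \<union> insert c C \<union> E) K"
    unfolding K_def by (intro psd_kernel_add[OF L] psd_kernel_rank_one) simp
  moreover have "K x y = K1 x y" if "x \<in> ?S1" "y \<in> ?S1" for x y
  proof -
    have "L x y = schur_compl K1 c x y"
      using L1 that by blast
    then show ?thesis
      using that schur_compl_plus_rank_one[OF K1 S(1,3) that] by (simp add: K_def g_def)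
  qed
  moreover have "K x y = K2 x y" if "x \<in> ?S2" "y \<in> ?S2" for x y
  proof -
    have "g z = K2 z c" if "z \<in> ?S2" for z
      using that agree AE by (auto simp: g_def)
    moreover have "K1 c c = K2 c c"
      using agree by simp
    ultimately show ?thesis
      using that L2'[OF that] schur_compl_plus_rank_one[OF K2 S(2,4) that] by (simp add: K_def)
  qed
  ultimately show ?thesis by blast
qed

text \<open>Positive completion of a pattern made of two overlapping diagonal blocks \<open>A \<union> C\<close>
  and \<open>C \<union> E\<close>, by induction on the overlap: the Schur complements at a pivot
  \<open>c \<in> C\<close> have a zero row and column at \<open>c\<close>, so \<open>c\<close> can be moved into \<open>A\<close>.\<close>
lemma psd_kernel_completion:
  assumes "finite C" "finite A" "finite E"
    and "A \<inter> C = {}" "C \<inter> E = {}" "A \<inter> E = {}"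
    and "psd_kernel (A \<union> C) K1" "psd_kernel (C \<union> E) K2"
    and "\<forall>x\<in>C. \<forall>y\<in>C. K1 x y = K2 x y"
  shows "\<exists>K. psd_kernel (A \<union> C \<union> E) K \<and> (\<forall>x\<in>A \<union> C. \<forall>y\<in>A \<union> C. K x y = K1 x y)
           \<and> (\<forall>x\<in>C \<union> E. \<forall>y\<in>C \<union> E. K x y = K2 x y)"
  using assms
proof (induction C arbitrary: A K1 K2 rule: finite_induct)
  case empty
  define K where "K x y = (if x \<in> A \<and> y \<in> A then K1 x y else 0) + (if x \<in> E \<and> y \<in> E then K2 x y else 0)"
    for x y
  have "psd_kernel (A \<union> E) K"
    unfolding K_def by (rule psd_kernel_add; rule psd_kernel_extend_zero) (use empty in auto)
  moreover have "\<forall>x\<in>A \<union> {}. \<forall>y\<in>A \<union> {}. K x y = K1 x y" "\<forall>x\<in>{} \<union> E. \<forall>y\<in>{} \<union> E. K x y = K2 x y"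
    using empty by (auto simp: K_def)
  ultimately show ?case by auto
next
  case (insert c C)
  have S: "finite (A \<union> insert c C)" "finite (insert c C \<union> E)" "c \<in> A \<union> insert c C" "c \<in> insert c C \<union> E"
    using insert by auto
  have K1: "psd_kernel (A \<union> insert c C) K1" and K2: "psd_kernel (insert c C \<union> E) K2"
    and agree: "\<forall>x\<in>insert c C. \<forall>y\<in>insert c C. K1 x y = K2 x y"
    using insert.prems by auto
  have "psd_kernel (insert c A \<union> C) (schur_compl K1 c)"
    using psd_kernel_schur_compl[OF K1 S(1,3)] by simp
  moreover have "psd_kernel (C \<union> E) (schur_compl K2 c)"
    using psd_kernel_subset[OF S(2) _ psd_kernel_schur_compl[OF K2 S(2,4)]] by auto
  moreover have "\<forall>x\<in>C. \<forall>y\<in>C. schur_compl K1 c x y = schur_compl K2 c x y"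
    using agree by (simp add: schur_compl_def)
  moreover have "finite (insert c A)" "insert c A \<inter> C = {}" "C \<inter> E = {}" "insert c A \<inter> E = {}"
    using insert.hyps(2) insert.prems(1,3,4,5) by auto
  ultimately obtain L where "psd_kernel (insert c A \<union> C \<union> E) L"
    "\<forall>x\<in>insert c A \<union> C. \<forall>y\<in>insert c A \<union> C. L x y = schur_compl K1 c x y"
    "\<forall>x\<in>C \<union> E. \<forall>y\<in>C \<union> E. L x y = schur_compl K2 c x y"
    using insert.IH[of "insert c A" "schur_compl K1 c" "schur_compl K2 c"] insert.prems(2) by blast
  moreover have "insert c A \<union> C = A \<union> insert c C"
    by auto
  ultimately show ?case
    using psd_kernel_completion_add_pivot[OF _ insert.prems(5) K1 K2 agree] insert.prems(1,2) S(1)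
    by (simp add: Un_assoc)
qed

definition block_toeplitz :: "(int \<Rightarrow> nat \<Rightarrow> nat \<Rightarrow> complex) \<Rightarrow> nat \<times> nat \<Rightarrow> nat \<times> nat \<Rightarrow> complex"
  where "block_toeplitz G x y = G (int (fst x) - int (fst y)) (snd x) (snd y)"

lemma psd_block_toeplitz_shift:
  assumes "psd_kernel ({..<m} \<times> {..<k}) (block_toeplitz G)"
  shows "psd_kernel ({1..m} \<times> {..<k}) (block_toeplitz G)"
proof -
  define f where "f x = (Suc (fst x), snd x)" for x :: "nat \<times> nat"
  have "f ` ({..<m} \<times> {..<k}) = {1..m} \<times> {..<k}"
  proof (intro equalityI subsetI)
    fix x assume "x \<in> {1..m} \<times> {..<k}"
    then have "x = f (fst x - 1, snd x)" "(fst x - 1, snd x) \<in> {..<m} \<times> {..<k}"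
      by (auto simp: f_def)
    then show "x \<in> f ` ({..<m} \<times> {..<k})" by blast
  qed (auto simp: f_def)
  moreover have "inj_on f ({..<m} \<times> {..<k})"
    by (auto simp: inj_on_def f_def prod_eq_iff)
  moreover have "(\<lambda>x y. block_toeplitz G (f x) (f y)) = block_toeplitz G"
    by (simp add: block_toeplitz_def f_def fun_eq_iff)
  ultimately show ?thesis
    using psd_kernel_image[of f "{..<m} \<times> {..<k}" "block_toeplitz G"] assms by simp
qed

text \<open>The blocks \<open>{0..m-1}\<close> and \<open>{1..m}\<close> of the desired extension are both the given
  positive Toeplitz matrix; any positive completion has its corner blocks at distance
  \<open>\<plusminus>m\<close> only, so it is again block Toeplitz.\<close>
lemma block_toeplitz_extend_step:
  assumes m: "m \<ge> 1" and T: "psd_kernel ({..<m} \<times> {..<k}) (block_toeplitz G)"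
  shows "\<exists>G'. (\<forall>d. \<bar>d\<bar> < int m \<longrightarrow> G' d = G d) \<and> psd_kernel ({..<Suc m} \<times> {..<k}) (block_toeplitz G')"
proof -
  define A where "A = {0::nat} \<times> {..<k}"
  define C where "C = {1..<m} \<times> {..<k}"
  define E where "E = {m} \<times> {..<k}"
  have AC: "A \<union> C = {..<m} \<times> {..<k}" and CE: "C \<union> E = {1..m} \<times> {..<k}"
    using m by (auto simp: A_def C_def E_def)
  have "finite C" "finite A" "finite E" "A \<inter> C = {}" "C \<inter> E = {}" "A \<inter> E = {}"
    using m by (auto simp: A_def C_def E_def)
  moreover have "psd_kernel (A \<union> C) (block_toeplitz G)" "psd_kernel (C \<union> E) (block_toeplitz G)"
    using T psd_block_toeplitz_shift[OF T] by (simp_all only: AC CE)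
  ultimately obtain K where K: "psd_kernel (A \<union> C \<union> E) K"
    and K_AC: "\<forall>x\<in>A \<union> C. \<forall>y\<in>A \<union> C. K x y = block_toeplitz G x y"
    and K_CE: "\<forall>x\<in>C \<union> E. \<forall>y\<in>C \<union> E. K x y = block_toeplitz G x y"
    using psd_kernel_completion[of C A E "block_toeplitz G" "block_toeplitz G"] by blast
  define G' where "G' d = (if d = int m then (\<lambda>p q. K (m, p) (0, q))
      else if d = - int m then (\<lambda>p q. K (0, p) (m, q)) else G d)" for d
  have "K x y = block_toeplitz G' x y"
    if x: "x \<in> {..<Suc m} \<times> {..<k}" and y: "y \<in> {..<Suc m} \<times> {..<k}" for x y
  proof -
    obtain i p j q where xy: "x = (i, p)" "y = (j, q)" by fastforce
    consider "i = m" "j = 0" | "i = 0" "j = m" | "\<bar>int i - int j\<bar> < int m" "i < m" "j < m"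
      | "\<bar>int i - int j\<bar> < int m" "1 \<le> i" "1 \<le> j"
      using x y xy m by fastforce
    then show ?thesis
    proof cases
      case 3
      then have "x \<in> A \<union> C" "y \<in> A \<union> C" using x y xy AC by auto
      then show ?thesis using K_AC 3 xy by (auto simp: block_toeplitz_def G'_def)
    next
      case 4
      then have "x \<in> C \<union> E" "y \<in> C \<union> E" using x y xy CE by auto
      then show ?thesis using K_CE 4 xy by (auto simp: block_toeplitz_def G'_def)
    qed (use m xy in \<open>auto simp: block_toeplitz_def G'_def\<close>)
  qed
  moreover have "A \<union> C \<union> E = {..<Suc m} \<times> {..<k}"
    using m by (auto simp: A_def C_def E_def)
  ultimately have "psd_kernel ({..<Suc m} \<times> {..<k}) (block_toeplitz G')"
    using K psd_kernel_cong by metis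
  moreover have "\<forall>d. \<bar>d\<bar> < int m \<longrightarrow> G' d = G d"
    by (auto simp: G'_def)
  ultimately show ?thesis by blast
qed

lemma block_toeplitz_extend:
  assumes "n \<ge> 1" "psd_kernel ({..<n} \<times> {..<k}) (block_toeplitz G)" "n \<le> M"
  shows "\<exists>G'. (\<forall>d. \<bar>d\<bar> < int n \<longrightarrow> G' d = G d) \<and> psd_kernel ({..<M} \<times> {..<k}) (block_toeplitz G')"
  using assms(3)
proof (induction M rule: dec_induct)
  case base
  then show ?case using assms(2) by blast
next
  case (step M)
  then obtain G' where G': "\<forall>d. \<bar>d\<bar> < int n \<longrightarrow> G' d = G d" "psd_kernel ({..<M} \<times> {..<k}) (block_toeplitz G')"
    by blast
  obtain G'' where "\<forall>d. \<bar>d\<bar> < int M \<longrightarrow> G'' d = G' d" "psd_kernel ({..<Suc M} \<times> {..<k}) (block_toeplitz G'')"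
    using block_toeplitz_extend_step[OF _ G'(2)] step assms(1) by auto
  then show ?case
    using G'(1) step(1) by (metis (no_types, lifting) less_le_trans of_nat_le_iff)
qed

section \<open>Fejer averaging\<close>

lemma sum_roots_of_unity_orthogonal:
  assumes N: "N > 0" and p: "p < N" and q: "q < N"
  shows "(\<Sum>l<N. (cis (2*pi/N) ^ l) ^ p * cnj ((cis (2*pi/N) ^ l) ^ q)) = (if p = q then of_nat N else 0)"
proof -
  define \<theta> where "\<theta> = 2*pi*(real p - real q)/N"
  define r where "r = cis \<theta>"
  have power_eq: "(cis (2*pi/N) ^ l) ^ p * cnj ((cis (2*pi/N) ^ l) ^ q) = r ^ l" for l
  proof -
    have "(cis (2*pi/N) ^ l) ^ p * cnj ((cis (2*pi/N) ^ l) ^ q)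
        = (cis (2*pi/N) ^ p * cnj (cis (2*pi/N) ^ q)) ^ l"
      by (simp add: power_mult[symmetric] mult.commute power_mult_distrib)
    also have "cis (2*pi/N) ^ p * cnj (cis (2*pi/N) ^ q) = r"
      by (simp add: r_def \<theta>_def Complex.DeMoivre cis_cnj cis_mult diff_divide_distrib algebra_simps)
    finally show ?thesis .
  qed
  show ?thesis
  proof (cases "p = q")
    case True
    then show ?thesis using power_eq by (simp add: r_def \<theta>_def)
  next
    case False
    have "r \<noteq> 1"
    proof
      assume "r = 1"
      then have "cos \<theta> = 1" unfolding r_def by (metis cis.sel(1) one_complex.sel(1))
      then obtain m :: int where "\<theta> = m * 2 * pi" by (auto simp: cos_one_2pi_int)
      then have "(2*pi) * (real p - real q) = (2*pi) * (m * N)" using N by (simp add: \<theta>_def field_simps)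
      then have "real p - real q = m * N" by (simp only: mult_cancel_left) simp
      then have "int p - int q = m * int N" by (metis of_int_eq_iff of_int_diff of_int_mult of_int_of_nat_eq)
      moreover have "\<bar>int p - int q\<bar> < int N" using p q by linarith
      ultimately show False
        using False N by (cases "m = 0") (auto simp: abs_mult)
    qed
    moreover have "r ^ N = 1"
      using N by (simp add: r_def Complex.DeMoivre \<theta>_def cis_multiple_2pi)
    ultimately have "(\<Sum>l<N. r ^ l) = 0" by (simp add: geometric_sum)
    then show ?thesis using False power_eq by simp
  qed
qed

lemma count_pairs_with_difference:
  assumes "i < n" "j < n" "n \<le> M"
  shows "(\<Sum>a<M. \<Sum>b<M. (if b + i = a + j then 1 else 0 :: complex)) = of_nat (M - nat \<bar>int i - int j\<bar>)"
proof -
  have "(\<Sum>b<M. (if b + i = a + j then 1 else 0 :: complex)) = (if i \<le> a + j \<and> a + j - i < M then 1 else 0)"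
    for a
  proof -
    have "(\<Sum>b<M. (if b + i = a + j then 1 else 0 :: complex))
        = (\<Sum>b<M. if b = a + j - i then (if i \<le> a + j then 1 else 0) else 0)"
      by (rule sum.cong) auto
    then show ?thesis by simp
  qed
  then have "(\<Sum>a<M. \<Sum>b<M. (if b + i = a + j then 1 else 0 :: complex))
      = (\<Sum>a<M. if i \<le> a + j \<and> a + j - i < M then 1 else 0)"
    by simp
  also have "\<dots> = (\<Sum>a\<in>{a\<in>{..<M}. i \<le> a + j \<and> a + j - i < M}. 1)"
    by (rule sum.inter_filter[symmetric]) simp
  also have "\<dots> = of_nat (card {a\<in>{..<M}. i \<le> a + j \<and> a + j - i < M})"
    by simp
  also have "card {a\<in>{..<M}. i \<le> a + j \<and> a + j - i < M} = M - nat \<bar>int i - int j\<bar>"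
  proof (cases "j \<le> i")
    case True
    then have "{a\<in>{..<M}. i \<le> a + j \<and> a + j - i < M} = {i - j..<M}" by auto
    then show ?thesis using True by simp
  next
    case False
    then have "{a\<in>{..<M}. i \<le> a + j \<and> a + j - i < M} = {..<M - (j - i)}" by auto
    then show ?thesis using False by simp
  qed
  finally show ?thesis .
qed

text \<open>The compression of the block Toeplitz matrix \<open>[G (a - b)]\<close>, \<open>a, b < M\<close>, to the
  vectors \<open>(z\<^sup>a u)\<^sub>a\<close>.\<close>
definition toeplitz_compression :: "nat \<Rightarrow> (int \<Rightarrow> nat \<Rightarrow> nat \<Rightarrow> complex) \<Rightarrow> complex \<Rightarrow> nat \<Rightarrow> nat \<Rightarrow> complex"
  where "toeplitz_compression M G z p q = (\<Sum>a<M. \<Sum>b<M. cnj (z ^ a) * z ^ b * G (int a - int b) p q)"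

lemma psd_kernel_toeplitz_compression:
  assumes "psd_kernel ({..<M} \<times> {..<k}) (block_toeplitz G)"
  shows "psd_kernel {..<k} (toeplitz_compression M G z)"
  unfolding psd_kernel_def
proof
  fix u
  define v :: "nat \<times> nat \<Rightarrow> complex" where "v x = z ^ fst x * u (snd x)" for x
  have "kernel_form {..<k} (toeplitz_compression M G z) u u
      = (\<Sum>a<M. \<Sum>p<k. \<Sum>b<M. \<Sum>q<k. cnj (z ^ a * u p) * G (int a - int b) p q * (z ^ b * u q))"
    by (simp add: kernel_form_def toeplitz_compression_def sum_distrib_left sum_distrib_right
        sum.swap[where A="{..<k}" and B="{..<M}"] algebra_simps)
  also have "\<dots> = kernel_form ({..<M} \<times> {..<k}) (block_toeplitz G) v v"
    by (simp add: kernel_form_def sum.cartesian_product' v_def block_toeplitz_def)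
  finally show "cnonneg (kernel_form {..<k} (toeplitz_compression M G z) u u)"
    using assms unfolding psd_kernel_def by simp
qed

locale positive_matrix_map =
  fixes \<Phi> :: "(nat \<Rightarrow> nat \<Rightarrow> complex) \<Rightarrow> 'h::complex_inner \<Rightarrow> 'h" and k :: nat
  assumes add: "\<Phi> (\<lambda>p q. X p q + Y p q) h = \<Phi> X h + \<Phi> Y h"
    and scale: "\<Phi> (\<lambda>p q. c * X p q) h = c *\<^sub>C \<Phi> X h"
    and apply_add: "\<Phi> X (x + y) = \<Phi> X x + \<Phi> X y"
    and apply_cscale: "\<Phi> X (c *\<^sub>C x) = c *\<^sub>C \<Phi> X x"
    and positive: "psd_kernel {..<k} B \<Longrightarrow> cnonneg (cinner (\<Phi> B h) h)"
begin

lemma zero: "\<Phi> (\<lambda>p q. 0) h = 0"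
  using add[of "\<lambda>p q. 0" "\<lambda>p q. 0" h] by simp

lemma sum: "\<Phi> (\<lambda>p q. \<Sum>i\<in>S. F i p q) h = (\<Sum>i\<in>S. \<Phi> (F i) h)"
proof (induction S rule: infinite_finite_induct)
  case (insert i S)
  then show ?case using add[of "F i" "\<lambda>p q. \<Sum>i\<in>S. F i p q" h] by simp
qed (simp_all add: zero)

lemma apply_sum: "\<Phi> X (\<Sum>i\<in>S. f i) = (\<Sum>i\<in>S. \<Phi> X (f i))"
proof (induction S rule: infinite_finite_induct)
  case (insert i S)
  then show ?case using apply_add by simp
qed (use apply_add[of X 0 0] in simp_all)

lemma form_toeplitz_compression:
  "cinner (\<Phi> (toeplitz_compression M G z) (\<Sum>j<n. cnj (z ^ j) *\<^sub>C x j)) (\<Sum>i<n. cnj (z ^ i) *\<^sub>C x i)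
   = (\<Sum>a<M. \<Sum>b<M. \<Sum>j<n. \<Sum>i<n. (z ^ (b + i) * cnj (z ^ (a + j))) * cinner (\<Phi> (G (int a - int b)) (x j)) (x i))"
proof -
  have "\<Phi> (toeplitz_compression M G z) (\<Sum>j<n. cnj (z ^ j) *\<^sub>C x j)
      = (\<Sum>a<M. \<Sum>b<M. \<Sum>j<n. (cnj (z ^ a) * z ^ b * cnj (z ^ j)) *\<^sub>C \<Phi> (G (int a - int b)) (x j))"
    unfolding toeplitz_compression_def[abs_def]
    by (simp add: sum scale apply_sum apply_cscale cscale_sum_right cscale_cscale)
  then show ?thesis
    by (simp only: cinner_sum_left) (simp add: cinner_sum_right cinner_cscale_left cinner_cscale_right
        power_add algebra_simps)
qed

text \<open>Averaging the form over the \<open>N\<close>-th roots of unity \<open>z\<close> keeps only the pairs with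
  \<open>b + i = a + j\<close>, i.e. \<open>a - b = i - j\<close>, which is where the Fejer weights come from.\<close>
lemma fejer_identity:
  assumes "n \<le> M"
  defines "N \<equiv> M + n"
  shows "(\<Sum>l<N. cinner (\<Phi> (toeplitz_compression M G (cis (2*pi/N) ^ l)) (\<Sum>j<n. cnj ((cis (2*pi/N) ^ l) ^ j) *\<^sub>C x j))
             (\<Sum>i<n. cnj ((cis (2*pi/N) ^ l) ^ i) *\<^sub>C x i))
       = of_nat N * (\<Sum>j<n. \<Sum>i<n. of_nat (M - nat \<bar>int i - int j\<bar>) * cinner (\<Phi> (G (int i - int j)) (x j)) (x i))"
proof (cases "M = 0")
  case True
  then show ?thesis using assms by simp
next
  case False
  then have N: "N > 0" by (simp add: N_def)
  define \<omega> where "\<omega> = cis (2*pi/N)"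
  define c where "c a b j i = cinner (\<Phi> (G (int a - int b)) (x j)) (x i)" for a b j i
  have "(\<Sum>l<N. cinner (\<Phi> (toeplitz_compression M G (\<omega> ^ l)) (\<Sum>j<n. cnj ((\<omega> ^ l) ^ j) *\<^sub>C x j))
          (\<Sum>i<n. cnj ((\<omega> ^ l) ^ i) *\<^sub>C x i))
      = (\<Sum>a<M. \<Sum>b<M. \<Sum>j<n. \<Sum>i<n. (\<Sum>l<N. (\<omega> ^ l) ^ (b + i) * cnj ((\<omega> ^ l) ^ (a + j))) * c a b j i)"
    unfolding form_toeplitz_compression c_def sum_distrib_right
    by (simp only: sum.swap[where A="{..<N}" and B="{..<M}"] sum.swap[where A="{..<N}" and B="{..<n}"])
  also have "\<dots> = (\<Sum>a<M. \<Sum>b<M. \<Sum>j<n. \<Sum>i<n. (if b + i = a + j then 1 else 0) * (of_nat N * c i j j i))"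
  proof (intro sum.cong refl)
    fix a b j i assume "a \<in> {..<M}" "b \<in> {..<M}" "j \<in> {..<n}" "i \<in> {..<n}"
    then have "b + i < N" "a + j < N" by (auto simp: N_def)
    then have "(\<Sum>l<N. (\<omega> ^ l) ^ (b + i) * cnj ((\<omega> ^ l) ^ (a + j))) = (if b + i = a + j then of_nat N else 0)"
      unfolding \<omega>_def by (rule sum_roots_of_unity_orthogonal[OF N])
    moreover have "c a b j i = c i j j i" if "b + i = a + j"
    proof -
      have "int a - int b = int i - int j" using that by linarith
      then show ?thesis by (simp add: c_def)
    qed
    ultimately show "(\<Sum>l<N. (\<omega> ^ l) ^ (b + i) * cnj ((\<omega> ^ l) ^ (a + j))) * c a b j i
        = (if b + i = a + j then 1 else 0) * (of_nat N * c i j j i)"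
      by auto
  qed
  also have "\<dots> = (\<Sum>j<n. \<Sum>i<n. (\<Sum>a<M. \<Sum>b<M. (if b + i = a + j then 1 else 0)) * (of_nat N * c i j j i))"
    unfolding sum_distrib_right
    by (simp only: sum.swap[where A="{..<M}" and B="{..<n}"])
  also have "\<dots> = (\<Sum>j<n. \<Sum>i<n. of_nat (M - nat \<bar>int i - int j\<bar>) * (of_nat N * c i j j i))"
    by (intro sum.cong refl) (simp add: count_pairs_with_difference assms(1))
  also have "\<dots> = of_nat N * (\<Sum>j<n. \<Sum>i<n. of_nat (M - nat \<bar>int i - int j\<bar>) * cinner (\<Phi> (G (int i - int j)) (x j)) (x i))"
    unfolding c_def sum_distrib_left by (intro sum.cong refl) (simp only: mult.left_commute)
  finally show ?thesis by (simp only: \<omega>_def)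
qed

lemma fejer_sum_nonneg:
  assumes "psd_kernel ({..<M} \<times> {..<k}) (block_toeplitz G)" "n \<le> M"
  shows "cnonneg (\<Sum>j<n. \<Sum>i<n. of_nat (M - nat \<bar>int i - int j\<bar>) * cinner (\<Phi> (G (int i - int j)) (x j)) (x i))"
proof -
  have "cnonneg (of_nat (M + n) * (\<Sum>j<n. \<Sum>i<n. of_nat (M - nat \<bar>int i - int j\<bar>) * cinner (\<Phi> (G (int i - int j)) (x j)) (x i)))"
    unfolding fejer_identity[OF assms(2), symmetric]
    by (intro cnonneg_sum positive psd_kernel_toeplitz_compression assms(1))
  then show ?thesis
    using assms(2) by (cases "M + n = 0") (auto simp: cnonneg_def zero_le_mult_iff)
qed

end

lemma cnonneg_of_scaled_lower_bounds:
  assumes "\<And>M. M \<ge> n \<Longrightarrow> cnonneg (of_nat M * Q - R)"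
  shows "cnonneg Q"
proof -
  have lim: "((\<lambda>M. Q - R / of_nat M) \<longlongrightarrow> Q) sequentially"
    using tendsto_diff[OF tendsto_const lim_const_over_n[of R]] by simp
  have "eventually (\<lambda>M. Q - R / of_nat M \<in> {z. cnonneg z}) sequentially"
    using eventually_ge_at_top[of "Suc n"]
  proof eventually_elim
    case (elim M)
    then have "Q - R / of_nat M = (of_nat M * Q - R) / of_nat M"
      by (simp add: field_simps)
    then show ?case
      using assms[of M] elim by (simp add: cnonneg_def Re_divide_of_nat Im_divide_of_nat)
  qed
  from Lim_in_closed_set[OF closed_cnonneg this sequentially_bot lim] show ?thesis
    by simp
qed

context positive_matrix_map
begin

text \<open>Extend the Toeplitz matrix to size \<open>M\<close>, apply the Fejer inequality, and let
  \<open>M \<rightarrow> \<infinity>\<close>: the weights \<open>(M - |i - j|) / M\<close> tend to \<open>1\<close>.\<close>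
lemma toeplitz_opmat_pos:
  assumes T: "psd_kernel ({..<n} \<times> {..<k}) (block_toeplitz G)"
  shows "opmat_pos n (\<lambda>i j. \<Phi> (G (int i - int j)))"
  unfolding opmat_pos_def
proof
  fix x
  define c where "c i j = cinner (\<Phi> (G (int i - int j)) (x j)) (x i)" for i j
  define Q where "Q = (\<Sum>j<n. \<Sum>i<n. c i j)"
  define R where "R = (\<Sum>j<n. \<Sum>i<n. of_nat (nat \<bar>int i - int j\<bar>) * c i j)"
  have "cnonneg (of_nat M * Q - R)" if M: "M \<ge> n" for M
  proof (cases "n = 0")
    case False
    then obtain G' where G': "\<forall>d. \<bar>d\<bar> < int n \<longrightarrow> G' d = G d" "psd_kernel ({..<M} \<times> {..<k}) (block_toeplitz G')"
      using block_toeplitz_extend[OF _ T M] by auto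
    have "(\<Sum>j<n. \<Sum>i<n. of_nat (M - nat \<bar>int i - int j\<bar>) * cinner (\<Phi> (G' (int i - int j)) (x j)) (x i))
        = (\<Sum>j<n. \<Sum>i<n. (of_nat M - of_nat (nat \<bar>int i - int j\<bar>)) * c i j)"
    proof (intro sum.cong refl)
      fix i j assume "j \<in> {..<n}" "i \<in> {..<n}"
      then have "\<bar>int i - int j\<bar> < int n"
        by auto
      then show "of_nat (M - nat \<bar>int i - int j\<bar>) * cinner (\<Phi> (G' (int i - int j)) (x j)) (x i)
          = (of_nat M - of_nat (nat \<bar>int i - int j\<bar>)) * c i j"
        using G'(1) M by (simp add: c_def of_nat_diff)
    qed
    also have "\<dots> = of_nat M * Q - R"
      by (simp add: Q_def R_def sum_distrib_left sum_subtractf left_diff_distrib)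
    finally show ?thesis
      using fejer_sum_nonneg[OF G'(2) M, where x=x] by simp
  qed (simp add: Q_def R_def cnonneg_def)
  then have "cnonneg Q"
    by (rule cnonneg_of_scaled_lower_bounds)
  moreover have "Q = (\<Sum>i<n. \<Sum>j<n. c i j)"
    unfolding Q_def by (rule sum.swap)
  ultimately show "cnonneg (\<Sum>i<n. \<Sum>j<n. cinner (\<Phi> (G (int i - int j)) (x j)) (x i))"
    by (simp add: c_def)
qed

end

section \<open>Approximation through matrix algebras\<close>

context positive_linear_map
begin

lemma opmat_form_bounded:
  fixes n :: nat
  shows "\<exists>C. \<forall>B \<epsilon>. (\<forall>i<n. \<forall>j<n. norm (B i j) \<le> \<epsilon>) \<longrightarrow>
     cmod (\<Sum>i<n. \<Sum>j<n. cinner (\<psi> (B i j) (x j)) (x i)) \<le> C * \<epsilon>"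
proof -
  have "\<forall>ij. \<exists>C. \<forall>b. cmod (cinner (\<psi> b (x (snd ij))) (x (fst ij))) \<le> C * norm b"
    using form_bounded by blast
  from choice[OF this] obtain C' :: "nat \<times> nat \<Rightarrow> real" where C': "\<forall>ij b. cmod (cinner (\<psi> b (x (snd ij))) (x (fst ij))) \<le> C' ij * norm b"
    by blast
  define C where "C i j = C' (i, j)" for i j :: nat
  have C: "cmod (cinner (\<psi> b (x j)) (x i)) \<le> C i j * norm b" for i j b
    using C'[rule_format, where ij = "(i, j)"] by (simp add: C_def)
  have "cmod (\<Sum>i<n. \<Sum>j<n. cinner (\<psi> (B i j) (x j)) (x i)) \<le> (\<Sum>i<n. \<Sum>j<n. \<bar>C i j\<bar>) * \<epsilon>"
    if B: "\<forall>i<n. \<forall>j<n. norm (B i j) \<le> \<epsilon>" for B \<epsilon>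
  proof -
    have "cmod (\<Sum>i<n. \<Sum>j<n. cinner (\<psi> (B i j) (x j)) (x i))
        \<le> (\<Sum>i<n. \<Sum>j<n. cmod (cinner (\<psi> (B i j) (x j)) (x i)))"
      by (rule order_trans[OF norm_sum sum_mono[OF norm_sum]])
    also have "\<dots> \<le> (\<Sum>i<n. \<Sum>j<n. \<bar>C i j\<bar> * \<epsilon>)"
    proof (intro sum_mono)
      fix i j assume "i \<in> {..<n}" "j \<in> {..<n}"
      then have "norm (B i j) \<le> \<epsilon>" using B by simp
      then have "C i j * norm (B i j) \<le> \<bar>C i j\<bar> * \<epsilon>"
        by (meson abs_ge_self abs_ge_zero mult_mono norm_ge_zero order_trans)
      then show "cmod (cinner (\<psi> (B i j) (x j)) (x i)) \<le> \<bar>C i j\<bar> * \<epsilon>"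
        using C[of "B i j" j i] by linarith
    qed
    finally show ?thesis by (simp add: sum_distrib_right)
  qed
  then show ?thesis by blast
qed

lemma opmat_pos_of_approx:
  assumes "\<And>\<epsilon>. \<epsilon> > 0 \<Longrightarrow> \<exists>B. opmat_pos n (\<lambda>i j. \<psi> (B i j)) \<and> (\<forall>i<n. \<forall>j<n. norm (A i j - B i j) \<le> \<epsilon>)"
  shows "opmat_pos n (\<lambda>i j. \<psi> (A i j))"
  unfolding opmat_pos_def
proof
  fix x
  define Q where "Q = (\<Sum>i<n. \<Sum>j<n. cinner (\<psi> (A i j) (x j)) (x i))"
  obtain C where C: "\<And>B \<epsilon>. \<forall>i<n. \<forall>j<n. norm (B i j) \<le> \<epsilon> \<Longrightarrow>
      cmod (\<Sum>i<n. \<Sum>j<n. cinner (\<psi> (B i j) (x j)) (x i)) \<le> C * \<epsilon>"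
    using opmat_form_bounded by blast
  have "\<exists>z\<in>{z. cnonneg z}. dist z Q < e" if "e > 0" for e
  proof -
    define \<epsilon> where "\<epsilon> = e / (\<bar>C\<bar> + 1)"
    have "\<epsilon> > 0" "\<bar>C\<bar> * \<epsilon> < e"
      using \<open>e > 0\<close> by (simp_all add: \<epsilon>_def field_simps)
    then obtain B where B: "opmat_pos n (\<lambda>i j. \<psi> (B i j))" "\<forall>i<n. \<forall>j<n. norm (A i j - B i j) \<le> \<epsilon>"
      using assms by blast
    define z where "z = (\<Sum>i<n. \<Sum>j<n. cinner (\<psi> (B i j) (x j)) (x i))"
    have "Q - z = (\<Sum>i<n. \<Sum>j<n. cinner (\<psi> (A i j - B i j) (x j)) (x i))"
      by (simp add: Q_def z_def diff cinner_diff_left sum_subtractf)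
    then have "dist z Q \<le> C * \<epsilon>"
      using C[OF B(2)] by (simp add: dist_norm norm_minus_commute)
    also have "\<dots> \<le> \<bar>C\<bar> * \<epsilon>"
      using \<open>\<epsilon> > 0\<close> by (simp add: mult_right_mono)
    also have "\<dots> < e"
      by fact
    finally show ?thesis
      using B(1) unfolding opmat_pos_def z_def by auto
  qed
  then show "cnonneg Q"
    using closed_approachable[OF closed_cnonneg] by blast
qed

end

lemma psd_kernel_of_block_cmat_pos:
  assumes "block_cmat_pos m k X"
  shows "psd_kernel ({..<m} \<times> {..<k}) (\<lambda>x y. X (fst x) (fst y) (snd x) (snd y))"
  unfolding psd_kernel_def
proof
  fix v :: "nat \<times> nat \<Rightarrow> complex"
  have "kernel_form ({..<m} \<times> {..<k}) (\<lambda>x y. X (fst x) (fst y) (snd x) (snd y)) v v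
      = (\<Sum>i<m. \<Sum>j<m. \<Sum>p<k. \<Sum>q<k. cnj (v (i, p)) * X i j p q * v (j, q))"
    by (simp add: kernel_form_def sum.cartesian_product' sum.swap[where A="{..<k}" and B="{..<m}"])
  moreover have "cnonneg (\<Sum>i<m. \<Sum>j<m. \<Sum>p<k. \<Sum>q<k. cnj (v (i, p)) * X i j p q * v (j, q))"
    using assms unfolding block_cmat_pos_def by (rule allE[where x="\<lambda>i p. v (i, p)"])
  ultimately show "cnonneg (kernel_form ({..<m} \<times> {..<k}) (\<lambda>x y. X (fst x) (fst y) (snd x) (snd y)) v v)"
    by simp
qed

lemma positive_matrix_map_comp_ccp_from_mat:
  assumes "positive_map \<psi>" and "ccp_from_mat k \<theta>"
  shows "positive_matrix_map (\<lambda>B. \<psi> (\<theta> B)) k"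
proof -
  interpret positive_linear_map \<psi> by (rule positive_linear_map.intro) fact
  have \<theta>_add: "\<theta> (\<lambda>p q. X p q + Y p q) = \<theta> X + \<theta> Y" for X Y
    using assms(2) unfolding ccp_from_mat_def by blast
  have \<theta>_scale: "\<theta> (\<lambda>p q. c * X p q) = c *\<^sub>C \<theta> X" for c X
    using assms(2) unfolding ccp_from_mat_def by blast
  have cp: "\<And>m X. block_cmat_pos m k X \<Longrightarrow> mat_pos m (\<lambda>i j. \<theta> (X i j))"
    using assms(2) unfolding ccp_from_mat_def by blast
  show ?thesis
  proof
    show "\<psi> (\<theta> (\<lambda>p q. X p q + Y p q)) h = \<psi> (\<theta> X) h + \<psi> (\<theta> Y) h" for X Y h
      by (simp add: \<theta>_add add)
    show "\<psi> (\<theta> (\<lambda>p q. c * X p q)) h = c *\<^sub>C \<psi> (\<theta> X) h" for c X h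
      by (simp add: \<theta>_scale cscale)
    show "\<psi> (\<theta> X) (x + y) = \<psi> (\<theta> X) x + \<psi> (\<theta> X) y" for X x y
      by (rule apply_add)
    show "\<psi> (\<theta> X) (c *\<^sub>C x) = c *\<^sub>C \<psi> (\<theta> X) x" for X c x
      by (rule apply_cscale)
    show "cnonneg (cinner (\<psi> (\<theta> B) h) h)" if "psd_kernel {..<k} B" for B h
    proof -
      have "block_cmat_pos 1 k (\<lambda>i j. B)"
        using that by (simp add: block_cmat_pos_def psd_kernel_def kernel_form_def)
      then obtain Y :: "nat \<Rightarrow> nat \<Rightarrow> 'a" where "\<theta> B = adj (Y 0 0) * Y 0 0"
        using cp[of 1] by (auto simp: mat_pos_def)
      then show ?thesis
        using form_nonneg by (auto simp: cstar_pos_def)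
    qed
  qed
qed

lemma opmat_pos_through_matrix_algebra:
  assumes "positive_map \<psi>" "ccp_to_mat k \<phi>" "ccp_from_mat k \<theta>"
    and "mat_pos n (\<lambda>i j. a (int i - int j))"
  shows "opmat_pos n (\<lambda>i j. \<psi> (\<theta> (\<phi> (a (int i - int j)))))"
proof -
  interpret positive_matrix_map "\<lambda>B. \<psi> (\<theta> B)" k
    using positive_matrix_map_comp_ccp_from_mat[OF assms(1,3)] .
  have "block_cmat_pos n k (\<lambda>i j. \<phi> (a (int i - int j)))"
    using assms(2,4) unfolding ccp_to_mat_def by blast
  then have "psd_kernel ({..<n} \<times> {..<k}) (block_toeplitz (\<lambda>d. \<phi> (a d)))"
    using psd_kernel_of_block_cmat_pos by (simp add: block_toeplitz_def[abs_def])
  from toeplitz_opmat_pos[OF this] show ?thesis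
    by simp
qed

theorem corollary7p4:
  fixes \<psi> :: "'a::cstar_algebra \<Rightarrow> 'h::{complex_inner, complete_space} \<Rightarrow> 'h"
    and n :: nat and a :: "int \<Rightarrow> 'a"
  assumes "nuclear TYPE('a)"
    and "positive_map \<psi>"
    and "mat_pos n (\<lambda>i j. a (int i - int j))"
  shows "opmat_pos n (\<lambda>i j. \<psi> (a (int i - int j)))"
proof -
  interpret positive_linear_map \<psi>
    using assms(2) by unfold_locales
  show ?thesis
  proof (rule opmat_pos_of_approx)
    fix \<epsilon> :: real
    assume "\<epsilon> > 0"
    then obtain k \<phi> \<theta> where ccp: "ccp_to_mat k \<phi>" "ccp_from_mat k \<theta>"
      and approx: "\<forall>b\<in>a ` {- int n..int n}. norm (\<theta> (\<phi> b) - b) < \<epsilon>"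
      using assms(1) unfolding nuclear_def by (meson finite_atLeastAtMost_int finite_imageI)
    have pos: "opmat_pos n (\<lambda>i j. \<psi> (\<theta> (\<phi> (a (int i - int j)))))"
      using opmat_pos_through_matrix_algebra[OF assms(2) ccp assms(3)] .
    have close: "\<forall>i<n. \<forall>j<n. norm (a (int i - int j) - \<theta> (\<phi> (a (int i - int j)))) \<le> \<epsilon>"
      using approx by (auto simp: norm_minus_commute intro!: less_imp_le)
    show "\<exists>B. opmat_pos n (\<lambda>i j. \<psi> (B i j)) \<and> (\<forall>i<n. \<forall>j<n. norm (a (int i - int j) - B i j) \<le> \<epsilon>)"
      by (intro exI[of _ "\<lambda>i j. \<theta> (\<phi> (a (int i - int j)))"] conjI pos close)
  qed
qed

end
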